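(* If $n$ is a non-negative integer, then $$\sum_{k = 1}^n \sum_{j = 0}^{k - 1} \frac{H_{n-j}}{k-j} = (n+1)H_n^2 - (2n+1)H_n + 2n,$$ $$\sum_{k = 1}^n \sum_{j = 0}^{k - 1} \frac{H_{n-j}^2}{k-j} = (n+1)H_n^3 - \frac{3}{2}(2n+1)H_n^2 + 3(2n+1)H_n + \frac{1}{2}H_n^{(2)} - 6n,$$ and $$\sum_{k = 1}^n \sum_{j = 0}^{k - 1} \frac{H_{n-j}^{(2)}}{k-j} = (n+1)H_n H_n^{(2)} - \frac{1}{2}(2n+1)H_n^{(2)} + H_n - \frac{1}{2}H_n^2.$$
   Context: $H_n=\sum_{m=1}^n\frac1m$ and $H_n^{(2)}=\sum_{m=1}^n\frac1{m^2}$. Empty sums are zero. *)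

theory Defs
  imports Complex_Main
begin

definition H :: "nat \<Rightarrow> real" where
  "H n = (\<Sum>m=1..n. 1 / real m)"

definition H2 :: "nat \<Rightarrow> real" where
  "H2 n = (\<Sum>m=1..n. 1 / (real m)^2)"

end

theory Submission
  imports Defs
begin

text \<open>Substituting \<open>m = k - j\<close> and exchanging the two summations, the inner sum over \<open>k\<close>
  becomes \<open>H (n - j)\<close>, so each double sum equals \<open>\<Sum>r=1..n. f r * H r\<close> for
  \<open>f = H\<close>, \<open>H\<^sup>2\<close>, \<open>H2\<close>. These sums have the stated closed forms, which is checked by
  induction: the closed form at \<open>n + 1\<close> exceeds the one at \<open>n\<close> by exactly the new summand.\<close>

lemma sum_triangle_swap:
  fixes a :: "nat \<Rightarrow> nat \<Rightarrow> 'a::comm_monoid_add"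
  shows "(\<Sum>k=1..n. \<Sum>j=0..k-1. a j k) = (\<Sum>j<n. \<Sum>k=Suc j..n. a j k)"
proof (induction n)
  case 0
  then show ?case by simp
next
  case (Suc n)
  have "(\<Sum>k=1..Suc n. \<Sum>j=0..k-1. a j k) = (\<Sum>k=1..n. \<Sum>j=0..k-1. a j k) + (\<Sum>j=0..n. a j (Suc n))"
    by simp
  also have "\<dots> = (\<Sum>j<n. \<Sum>k=Suc j..n. a j k) + ((\<Sum>j<n. a j (Suc n)) + a n (Suc n))"
    using Suc by (simp add: atLeast0AtMost lessThan_Suc_atMost[symmetric])
  also have "\<dots> = (\<Sum>j<n. \<Sum>k=Suc j..Suc n. a j k) + a n (Suc n)"
    by (simp add: sum.distrib add.assoc)
  also have "\<dots> = (\<Sum>j<Suc n. \<Sum>k=Suc j..Suc n. a j k)"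
    by simp
  finally show ?case .
qed

lemma sum_shifted_reciprocals:
  "(\<Sum>k=Suc j..n. c / real (k - j)) = c * H (n - j)"
proof -
  have "(\<Sum>k=Suc j..n. c / real (k - j)) = (\<Sum>m=1..n-j. c / real m)"
    by (rule sum.reindex_bij_witness[where i="\<lambda>m. m + j" and j="\<lambda>k. k - j"]) auto
  then show ?thesis
    by (simp add: H_def sum_distrib_left)
qed

lemma double_sum_harmonic_weights:
  "(\<Sum>k=1..n. \<Sum>j=0..k-1. f (n - j) / real (k - j)) = (\<Sum>r=1..n. f r * H r)"
proof -
  have "(\<Sum>k=1..n. \<Sum>j=0..k-1. f (n - j) / real (k - j))
      = (\<Sum>j<n. \<Sum>k=Suc j..n. f (n - j) / real (k - j))"
    by (rule sum_triangle_swap)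
  also have "\<dots> = (\<Sum>j<n. f (n - j) * H (n - j))"
    by (intro sum.cong refl sum_shifted_reciprocals)
  also have "\<dots> = (\<Sum>r=1..n. f r * H r)"
    by (rule sum.reindex_bij_witness[where i="\<lambda>r. n - r" and j="\<lambda>j. n - j"]) auto
  finally show ?thesis .
qed

lemma sum_atLeast1_eqI:
  fixes g F :: "nat \<Rightarrow> 'a::comm_monoid_add"
  assumes "F 0 = 0" and "\<And>m. F (Suc m) = F m + g (Suc m)"
  shows "(\<Sum>r=1..n. g r) = F n"
  using assms by (induction n) (simp_all add: add.commute)

lemma H_Suc: "H (Suc n) = H n + 1 / (real n + 1)"
  by (simp add: H_def)

lemma H2_Suc: "H2 (Suc n) = H2 n + 1 / (real n + 1)^2"
  by (simp add: H2_def)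

lemma H_0 [simp]: "H 0 = 0" and H2_0 [simp]: "H2 0 = 0"
  by (simp_all add: H_def H2_def)

lemma sum_H_squared:
  "(\<Sum>r=1..n. H r ^ 2) = real (n+1) * H n ^ 2 - real (2*n+1) * H n + 2 * real n"
proof (rule sum_atLeast1_eqI)
  fix m
  \<comment> \<open>With \<open>m + 1\<close> as an atom, \<open>field_simps\<close> can see that the denominators
    \<open>x\<close> and \<open>x\<^sup>2\<close> are nonzero; unexpanded they become unprovable side conditions.\<close>
  define x where "x = real m + 1"
  have x: "x \<noteq> 0" "real m = x - 1"
    unfolding x_def by linarith+
  show "real (Suc m + 1) * H (Suc m) ^ 2 - real (2 * Suc m + 1) * H (Suc m) + 2 * real (Suc m)
    = real (m+1) * H m ^ 2 - real (2*m+1) * H m + 2 * real m + H (Suc m) ^ 2"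
    unfolding H_Suc by (simp add: x field_simps power2_eq_square)
qed simp

lemma sum_H_cubed:
  "(\<Sum>r=1..n. H r ^ 3) = real (n+1) * H n ^ 3 - 3/2 * real (2*n+1) * H n ^ 2
     + 3 * real (2*n+1) * H n + 1/2 * H2 n - 6 * real n"
proof (rule sum_atLeast1_eqI)
  fix m
  define x where "x = real m + 1"
  have x: "x \<noteq> 0" "real m = x - 1"
    unfolding x_def by linarith+
  show "real (Suc m + 1) * H (Suc m) ^ 3 - 3/2 * real (2 * Suc m + 1) * H (Suc m) ^ 2
      + 3 * real (2 * Suc m + 1) * H (Suc m) + 1/2 * H2 (Suc m) - 6 * real (Suc m)
    = real (m+1) * H m ^ 3 - 3/2 * real (2*m+1) * H m ^ 2
      + 3 * real (2*m+1) * H m + 1/2 * H2 m - 6 * real m + H (Suc m) ^ 3"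
    unfolding H_Suc H2_Suc by (simp add: x field_simps power2_eq_square power3_eq_cube)
qed simp

lemma sum_H2_times_H:
  "(\<Sum>r=1..n. H2 r * H r) = real (n+1) * H n * H2 n - 1/2 * real (2*n+1) * H2 n + H n - 1/2 * H n ^ 2"
proof (rule sum_atLeast1_eqI)
  fix m
  define x where "x = real m + 1"
  have x: "x \<noteq> 0" "real m = x - 1"
    unfolding x_def by linarith+
  show "real (Suc m + 1) * H (Suc m) * H2 (Suc m) - 1/2 * real (2 * Suc m + 1) * H2 (Suc m)
      + H (Suc m) - 1/2 * H (Suc m) ^ 2
    = real (m+1) * H m * H2 m - 1/2 * real (2*m+1) * H2 m + H m - 1/2 * H m ^ 2
      + H2 (Suc m) * H (Suc m)"
    unfolding H_Suc H2_Suc by (simp add: x field_simps power2_eq_square)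
qed simp

theorem proposition12:
  fixes n :: nat
  shows "((\<Sum>k=1..n. \<Sum>j=0..k-1. H (n - j) / real (k - j))
           = real (n+1) * (H n)^2 - real (2*n+1) * H n + 2 * real n)
     \<and> ((\<Sum>k=1..n. \<Sum>j=0..k-1. (H (n - j))^2 / real (k - j))
           = real (n+1) * (H n)^3 - 3/2 * real (2*n+1) * (H n)^2
             + 3 * real (2*n+1) * H n + 1/2 * H2 n - 6 * real n)
     \<and> ((\<Sum>k=1..n. \<Sum>j=0..k-1. H2 (n - j) / real (k - j))
           = real (n+1) * H n * H2 n - 1/2 * real (2*n+1) * H2 n + H n - 1/2 * (H n)^2)"
  unfolding double_sum_harmonic_weights[of H] double_sum_harmonic_weights[of "\<lambda>r. H r ^ 2"]
    double_sum_harmonic_weights[of H2]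
  using sum_H_squared[of n] sum_H_cubed[of n] sum_H2_times_H[of n]
  by (simp add: power2_eq_square power3_eq_cube)

end
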